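(* Let $w,w'\in[0,1]$ with $w+w'=1$. If $\textbf{F}$ is a strongly convex and $gH$-differentiable IVF on a nonempty convex subset $\mathcal{X}$ of $\mathbb{R}^n$ with $gH$-Lipschitz gradient, then there exist $\sigma>0$ and $L>0$ such that \[(\mathcal{W}(\nabla\textbf{F}(x))-\mathcal{W}(\nabla\textbf{F}(y)))^T(x-y)\ge\frac{\sigma}{L^2}\lVert\mathcal{W}(\nabla\textbf{F}(x))-\mathcal{W}(\nabla\textbf{F}(y))\rVert^2\quad\text{for all }x,y\in\mathcal{X}.\]
   Context: $I(\mathbb{R})$: closed bounded intervals $\textbf{A}=[\underline{a},\overline{a}]$ with Moore arithmetic ($\oplus$ endpointwise; $\lambda\odot\textbf{A}=[\lambda\underline{a},\lambda\overline{a}]$ if $\lambda\ge0$, $[\lambda\overline{a},\lambda\underline{a}]$ if $\lambda<0$); $\textbf{A}\ominus_{gH}\textbf{B}=[\min\{\underline{a}-\underline{b},\overline{a}-\overline{b}\},\max\{\underline{a}-\underline{b},\overline{a}-\overline{b}\}]$ (componentwise on $I(\mathbb{R})^n$). $\textbf{A}\preceq\textbf{B}$ iff $\underline{a}\le\underline{b}$, $\overline{a}\le\overline{b}$. Norms: $\lVert\textbf{A}\rVert_{I(\mathbb{R})}=\max\{|\underline{a}|,|\overline{a}|\}$, $\lVert(\textbf{A}_i)\rVert_{I(\mathbb{R})^n}=\sum_i\lVert\textbf{A}_i\rVert_{I(\mathbb{R})}$, $\lVert\cdot\rVert$ Euclidean. $D_i\textbf{F}(x)=\lim_{h\to0}\frac1h\odot(\textbf{F}(x+he_i)\ominus_{gH}\textbf{F}(x))$,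 $\nabla\textbf{F}(x)=(D_1\textbf{F}(x),\dots,D_n\textbf{F}(x))^T$. Linear IVF: $\textbf{L}(x)=\bigoplus_i x_i\odot\textbf{L}(e_i)$. $\textbf{F}$ is $gH$-differentiable at $\bar{x}$ if there exist a linear IVF $\textbf{L}_{\bar{x}}$, an IVF $\textbf{E}(\textbf{F}(\bar{x});d)$ and $\delta>0$ with $(\textbf{F}(\bar{x}+d)\ominus_{gH}\textbf{F}(\bar{x}))\ominus_{gH}\textbf{L}_{\bar{x}}(d)=\lVert d\rVert\odot\textbf{E}(\textbf{F}(\bar{x});d)$ for $\lVert d\rVert<\delta$ and $\textbf{E}\to\textbf{0}$ as $\lVert d\rVert\to0$. Strongly convex: there exist a convex IVF $\textbf{G}$ (i.e. $\textbf{G}(\lambda x_1+(1-\lambda)x_2)\preceq\lambda\odot\textbf{G}(x_1)\oplus(1-\lambda)\odot\textbf{G}(x_2)$) and $\sigma>0$ with $\textbf{F}(x)=\textbf{G}(x)\oplus\frac12\lVert x\rVert^2\odot[\sigma,\sigma]$. $gH$-Lipschitz gradient: $\lVert\nabla\textbf{F}(x)\ominus_{gH}\nabla\textbf{F}(y)\rVert_{I(\mathbb{R})^n}\le M\lVert x-y\rVert$ for some $M>0$ and all $x,y$. $\mathcal{W}(\textbf{A}_1,\dots,\textbf{A}_n)=(w\underline{a}_1+w'\overline{a}_1,\dots,w\underline{a}_n+w'\overline{a}_n)^T$. *)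

theory Defs
  imports "HOL-Analysis.Analysis"
begin

text \<open>Closed bounded intervals [a_lo, a_hi] represented as pairs (a_lo, a_hi)
  with a_lo \<le> a_hi.\<close>

type_synonym interval = "real \<times> real"

definition ivalid :: "interval \<Rightarrow> bool" where
  "ivalid A \<longleftrightarrow> fst A \<le> snd A"

definition iplus :: "interval \<Rightarrow> interval \<Rightarrow> interval" where
  "iplus A B = (fst A + fst B, snd A + snd B)"

definition iscale :: "real \<Rightarrow> interval \<Rightarrow> interval" where
  "iscale l A = (if l \<ge> 0 then (l * fst A, l * snd A) else (l * snd A, l * fst A))"

definition gHminus :: "interval \<Rightarrow> interval \<Rightarrow> interval" where
  "gHminus A B = (min (fst A - fst B) (snd A - snd B), max (fst A - fst B) (snd A - snd B))"

definition ile :: "interval \<Rightarrow> interval \<Rightarrow> bool" where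
  "ile A B \<longleftrightarrow> fst A \<le> fst B \<and> snd A \<le> snd B"

definition inorm :: "interval \<Rightarrow> real" where
  "inorm A = max \<bar>fst A\<bar> \<bar>snd A\<bar>"

definition inorm_vec :: "interval ^ 'n \<Rightarrow> real" where
  "inorm_vec V = (\<Sum>i\<in>UNIV. inorm (V $ i))"

definition gHminus_vec :: "interval ^ 'n \<Rightarrow> interval ^ 'n \<Rightarrow> interval ^ 'n" where
  "gHminus_vec U V = (\<chi> i. gHminus (U $ i) (V $ i))"

definition is_ivf :: "(real ^ 'n \<Rightarrow> interval) \<Rightarrow> bool" where
  "is_ivf F \<longleftrightarrow> (\<forall>x. ivalid (F x))"

definition gH_partial :: "(real ^ 'n \<Rightarrow> interval) \<Rightarrow> real ^ 'n \<Rightarrow> 'n \<Rightarrow> interval" where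
  "gH_partial F x i =
     Lim (at 0) (\<lambda>h. iscale (1 / h) (gHminus (F (x + h *\<^sub>R axis i 1)) (F x)))"

definition gH_gradient :: "(real ^ 'n \<Rightarrow> interval) \<Rightarrow> real ^ 'n \<Rightarrow> interval ^ 'n" where
  "gH_gradient F x = (\<chi> i. gH_partial F x i)"

text \<open>Linear IVF: L(x) = sum_i x_i (.) L(e_i) (Moore sums; + on real \<times> real is endpointwise, i.e. iplus).\<close>
definition linear_ivf :: "(real ^ 'n \<Rightarrow> interval) \<Rightarrow> bool" where
  "linear_ivf L \<longleftrightarrow> is_ivf L \<and>
     (\<forall>x. L x = (\<Sum>i\<in>UNIV. iscale (x $ i) (L (axis i 1))))"

definition gH_differentiable_at :: "(real ^ 'n \<Rightarrow> interval) \<Rightarrow> real ^ 'n \<Rightarrow> bool" where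
  "gH_differentiable_at F xb \<longleftrightarrow>
     (\<exists>L E \<delta>. linear_ivf L \<and> \<delta> > 0 \<and>
        (\<forall>d. norm d < \<delta> \<longrightarrow>
           gHminus (gHminus (F (xb + d)) (F xb)) (L d) = iscale (norm d) (E d)) \<and>
        (E \<longlongrightarrow> (0, 0)) (at 0))"

definition convex_ivf_on :: "(real ^ 'n) set \<Rightarrow> (real ^ 'n \<Rightarrow> interval) \<Rightarrow> bool" where
  "convex_ivf_on X G \<longleftrightarrow> (\<forall>x\<in>X. ivalid (G x)) \<and>
     (\<forall>x1\<in>X. \<forall>x2\<in>X. \<forall>l\<in>{0..1}.
        ile (G (l *\<^sub>R x1 + (1 - l) *\<^sub>R x2)) (iplus (iscale l (G x1)) (iscale (1 - l) (G x2))))"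

definition strongly_convex_ivf_on :: "(real ^ 'n) set \<Rightarrow> (real ^ 'n \<Rightarrow> interval) \<Rightarrow> bool" where
  "strongly_convex_ivf_on X F \<longleftrightarrow>
     (\<exists>G \<sigma>. convex_ivf_on X G \<and> \<sigma> > 0 \<and>
        (\<forall>x\<in>X. F x = iplus (G x) (iscale (1/2 * (norm x)\<^sup>2) (\<sigma>, \<sigma>))))"

definition gH_lipschitz_gradient_on :: "(real ^ 'n) set \<Rightarrow> (real ^ 'n \<Rightarrow> interval) \<Rightarrow> bool" where
  "gH_lipschitz_gradient_on X F \<longleftrightarrow>
     (\<exists>M > 0. \<forall>x\<in>X. \<forall>y\<in>X.
        inorm_vec (gHminus_vec (gH_gradient F x) (gH_gradient F y)) \<le> M * norm (x - y))"

definition Wmap :: "real \<Rightarrow> real \<Rightarrow> interval ^ 'n \<Rightarrow> real ^ 'n" where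
  "Wmap w w' V = (\<chi> i. w * fst (V $ i) + w' * snd (V $ i))"

end

theory Submission
  imports Defs
begin

(* Fix x, y in X and the segment z t = x + t (y - x).  Strong convexity makes both endpoints P t, Q t
   of the gH-directional derivative grad F (z t)^T (y - x) increase in t at rate at least
   sigma |y - x|^2.  The width of F has absolute increments given to first order by the weighted l1
   norm sum_m width (D_m F) |d_m|; three increments between two close points of the segment (found by
   a countability argument) then show that at most one partial derivative D_m F with (y - x)_m ~= 0 is
   a nondegenerate interval.  Hence W (grad F (z t)) . (y - x) equals w P t + w' Q t or w Q t + w' P t
   for every t, and a continuous selection of two increasing functions is increasing: W o grad F is
   sigma-strongly monotone.  As |W (grad F x) - W (grad F y)| <= M |x - y| for the Lipschitz constant M
   of the gradient, the inequality holds with L = M. *)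

section \<open>Endpoint calculus of intervals\<close>

definition iwidth :: "interval \<Rightarrow> real" where
  "iwidth A = snd A - fst A"

definition iinner :: "interval ^ 'n \<Rightarrow> real ^ 'n \<Rightarrow> interval" where
  "iinner V d = (\<Sum>i\<in>UNIV. iscale (d $ i) (V $ i))"

definition weighted_l1 :: "('n \<Rightarrow> real) \<Rightarrow> real ^ 'n \<Rightarrow> real" where
  "weighted_l1 \<rho> d = (\<Sum>m\<in>UNIV. \<rho> m * \<bar>d $ m\<bar>)"

lemma iscale_nonneg: "0 \<le> r \<Longrightarrow> iscale r A = (r * fst A, r * snd A)"
  by (simp add: iscale_def)

lemma iscale_nonpos: "r \<le> 0 \<Longrightarrow> iscale r A = (r * snd A, r * fst A)"
  by (auto simp: iscale_def)

lemma iscale_degenerate: "fst A = snd A \<Longrightarrow> iscale r A = (r * fst A, r * snd A)"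
  by (simp add: iscale_def)

lemma iscale_uminus: "iscale (- r) A = (- snd (iscale r A), - fst (iscale r A))"
  by (auto simp: iscale_def)

lemma iscale_mult: "0 \<le> h \<Longrightarrow> iscale (h * r) A = iscale h (iscale r A)"
  by (auto simp: iscale_def zero_le_mult_iff)

lemma inorm_gHminus: "inorm (gHminus A B) = max \<bar>fst A - fst B\<bar> \<bar>snd A - snd B\<bar>"
  by (auto simp: inorm_def gHminus_def)

lemma inorm_iscale: "inorm (iscale r A) = \<bar>r\<bar> * inorm A"
  by (auto simp: inorm_def iscale_def abs_mult max_mult_distrib_left)

lemma inorm_gHminus_iscale_inverse:
  assumes "h \<noteq> 0"
  shows "inorm (gHminus (iscale (1 / h) A) B) = inorm (gHminus A (iscale h B)) / \<bar>h\<bar>"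
proof -
  have "\<bar>p / h - q\<bar> = \<bar>p - h * q\<bar> / \<bar>h\<bar>" for p q
    using assms by (simp add: abs_divide [symmetric] diff_divide_distrib)
  then show ?thesis
    using assms by (auto simp: inorm_gHminus iscale_def max_divide_distrib_right max.commute)
qed

lemma tendsto_inorm: "(f \<longlongrightarrow> A) F \<Longrightarrow> ((\<lambda>x. inorm (f x)) \<longlongrightarrow> inorm A) F"
  unfolding inorm_def by (intro tendsto_intros)

lemma iwidth_gHminus: "iwidth (gHminus A B) = \<bar>iwidth A - iwidth B\<bar>"
  by (auto simp: iwidth_def gHminus_def)

lemma abs_iwidth_diff_le: "\<bar>iwidth A - iwidth B\<bar> \<le> 2 * inorm (gHminus A B)"
  unfolding iwidth_def inorm_gHminus by (simp add: max_def abs_if)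

lemma tendsto_of_inorm_gHminus:
  fixes f :: "'a \<Rightarrow> interval"
  assumes "((\<lambda>x. inorm (gHminus (f x) A)) \<longlongrightarrow> 0) F"
  shows "(f \<longlongrightarrow> A) F"
proof (rule LIM_zero_cancel, rule Lim_null_comparison)
  have "norm (f x - A) \<le> 2 * inorm (gHminus (f x) A)" for x
  proof -
    have "f x - A = (fst (f x) - fst A, snd (f x) - snd A)"
      by (simp add: prod_eq_iff)
    then show ?thesis
      using norm_Pair_le [of "fst (f x) - fst A" "snd (f x) - snd A"]
      by (simp add: inorm_gHminus max_def)
  qed
  then show "\<forall>\<^sub>F x in F. norm (f x - A) \<le> 2 * inorm (gHminus (f x) A)"
    by simp
  show "((\<lambda>x. 2 * inorm (gHminus (f x) A)) \<longlongrightarrow> 0) F"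
    using tendsto_mult_right_zero [OF assms] by simp
qed

lemma iinner_scaleR: "0 \<le> h \<Longrightarrow> iinner V (h *\<^sub>R d) = iscale h (iinner V d)"
  by (simp add: iinner_def iscale_mult iscale_nonneg sum_distrib_left fst_sum snd_sum prod_eq_iff)

lemma iinner_uminus: "iinner V (- d) = (- snd (iinner V d), - fst (iinner V d))"
  by (simp add: iinner_def iscale_uminus fst_sum snd_sum sum_negf prod_eq_iff)

lemma iinner_axis: "iinner V (h *\<^sub>R axis i 1) = iscale h (V $ i)"
proof -
  have "iinner V (h *\<^sub>R axis i 1) = (\<Sum>k\<in>UNIV. if k = i then iscale h (V $ i) else 0)"
    unfolding iinner_def by (rule sum.cong) (auto simp: axis_def iscale_def zero_prod_def)
  then show ?thesis by simp
qed

lemma iwidth_iinner: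
  assumes "\<And>m. fst (V $ m) \<le> snd (V $ m)"
  shows "iwidth (iinner V d) = weighted_l1 (\<lambda>m. iwidth (V $ m)) d"
proof -
  have "iwidth (iscale (d $ m) (V $ m)) = iwidth (V $ m) * \<bar>d $ m\<bar>" for m
    using assms [of m] by (cases "0 \<le> d $ m") (auto simp: iscale_def iwidth_def algebra_simps)
  then show ?thesis
    by (simp add: iinner_def weighted_l1_def iwidth_def fst_sum snd_sum flip: sum_subtractf)
qed

lemma linear_ivf_iinner:
  assumes "linear_ivf L"
  shows "L d = iinner (\<chi> i. L (axis i 1)) d"
proof -
  have "L d = (\<Sum>i\<in>UNIV. iscale (d $ i) (L (axis i 1)))"
    using assms unfolding linear_ivf_def by blast
  then show ?thesis
    by (simp add: iinner_def)
qed

section \<open>The gH-gradient as linear part\<close>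

lemma gH_partial_eq_linear:
  fixes F :: "real ^ 'n \<Rightarrow> interval"
  assumes L: "linear_ivf L" and "\<delta> > 0"
    and incr: "\<forall>d. norm d < \<delta> \<longrightarrow> gHminus (gHminus (F (z + d)) (F z)) (L d) = iscale (norm d) (E d)"
    and E: "(E \<longlongrightarrow> (0, 0)) (at 0)"
  shows "gH_partial F z i = L (axis i 1)"
proof -
  define q where "q h = iscale (1 / h) (gHminus (F (z + h *\<^sub>R axis i 1)) (F z))" for h :: real
  have L_axis: "L (h *\<^sub>R axis i 1) = iscale h (L (axis i 1))" for h
    using linear_ivf_iinner [OF L, of "h *\<^sub>R axis i 1"] by (simp add: iinner_axis)
  have q_error: "inorm (gHminus (q h) (L (axis i 1))) = inorm (E (h *\<^sub>R axis i 1))"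
    if "h \<noteq> 0" "dist h 0 < \<delta>" for h
  proof -
    have "inorm (gHminus (q h) (L (axis i 1)))
        = inorm (gHminus (gHminus (F (z + h *\<^sub>R axis i 1)) (F z)) (L (h *\<^sub>R axis i 1))) / \<bar>h\<bar>"
      using that by (simp add: q_def inorm_gHminus_iscale_inverse L_axis)
    also have "\<dots> = inorm (E (h *\<^sub>R axis i 1))"
      using incr that by (simp add: inorm_iscale)
    finally show ?thesis .
  qed
  have "((\<lambda>h. h *\<^sub>R axis i (1::real)) \<longlongrightarrow> (0 :: real ^ 'n)) (at 0)"
    by (auto intro!: tendsto_eq_intros)
  then have "((\<lambda>h. E (h *\<^sub>R axis i 1)) \<longlongrightarrow> (0, 0)) (at 0)"
    by (rule LIM_compose2 [OF _ E]) (auto intro: exI [of _ 1])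
  then have "((\<lambda>h. inorm (E (h *\<^sub>R axis i 1))) \<longlongrightarrow> 0) (at 0)"
    using tendsto_inorm by (fastforce simp: inorm_def)
  moreover have "\<forall>\<^sub>F h in at 0. inorm (E (h *\<^sub>R axis i 1)) = inorm (gHminus (q h) (L (axis i 1)))"
    unfolding eventually_at using \<open>\<delta> > 0\<close> q_error by (intro exI [of _ \<delta>]) auto
  ultimately have "((\<lambda>h. inorm (gHminus (q h) (L (axis i 1)))) \<longlongrightarrow> 0) (at 0)"
    by (rule Lim_transform_eventually)
  then have "(q \<longlongrightarrow> L (axis i 1)) (at 0)"
    by (rule tendsto_of_inorm_gHminus)
  then show ?thesis
    unfolding gH_partial_def q_def by (simp add: tendsto_Lim)
qed

lemma gH_differentiable_at_iinner:
  fixes F :: "real ^ 'n \<Rightarrow> interval"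
  assumes "gH_differentiable_at F z"
  obtains E \<delta> where "\<delta> > 0" and "linear_ivf (iinner (gH_gradient F z))"
    and "\<forall>d. norm d < \<delta> \<longrightarrow>
      gHminus (gHminus (F (z + d)) (F z)) (iinner (gH_gradient F z) d) = iscale (norm d) (E d)"
    and "(E \<longlongrightarrow> (0, 0)) (at 0)"
proof -
  obtain L E \<delta> where L: "linear_ivf L" and \<delta>: "\<delta> > 0"
    and incr: "\<forall>d. norm d < \<delta> \<longrightarrow> gHminus (gHminus (F (z + d)) (F z)) (L d) = iscale (norm d) (E d)"
    and E: "(E \<longlongrightarrow> (0, 0)) (at 0)"
    using assms unfolding gH_differentiable_at_def by blast
  have "gH_gradient F z = (\<chi> i. L (axis i 1))"
    using gH_partial_eq_linear [OF L \<delta> incr E] by (simp add: gH_gradient_def)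
  then have "L = iinner (gH_gradient F z)"
    by (simp only:) (rule ext, rule linear_ivf_iinner [OF L])
  then show ?thesis
    using that \<delta> L incr E by blast
qed

lemma gH_gradient_valid:
  fixes F :: "real ^ 'n \<Rightarrow> interval"
  assumes "gH_differentiable_at F z"
  shows "fst (gH_gradient F z $ i) \<le> snd (gH_gradient F z $ i)"
proof -
  have "linear_ivf (iinner (gH_gradient F z))"
    by (rule gH_differentiable_at_iinner [OF assms])
  then have "is_ivf (iinner (gH_gradient F z))"
    unfolding linear_ivf_def by blast
  then have "ivalid (iinner (gH_gradient F z) (1 *\<^sub>R axis i 1))"
    unfolding is_ivf_def by blast
  then show ?thesis
    by (simp only: iinner_axis) (simp add: iscale_def ivalid_def)
qed

lemma gH_increment_approx:
  fixes F :: "real ^ 'n \<Rightarrow> interval"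
  assumes "gH_differentiable_at F z" and "e > 0"
  shows "\<exists>r>0. \<forall>d. norm d < r \<longrightarrow>
    inorm (gHminus (gHminus (F (z + d)) (F z)) (iinner (gH_gradient F z) d)) \<le> e * norm d"
proof -
  obtain E \<delta> where "\<delta> > 0"
    and incr: "\<forall>d. norm d < \<delta> \<longrightarrow>
      gHminus (gHminus (F (z + d)) (F z)) (iinner (gH_gradient F z) d) = iscale (norm d) (E d)"
    and E: "(E \<longlongrightarrow> (0, 0)) (at 0)"
    using gH_differentiable_at_iinner [OF assms(1)] by blast
  have "\<forall>\<^sub>F d in at 0. inorm (E d) < e"
    using order_tendstoD(2) [OF tendsto_inorm [OF E], of e] assms(2) by (simp add: inorm_def)
  then obtain r where "r > 0" and r: "\<And>d. d \<noteq> 0 \<Longrightarrow> dist d 0 < r \<Longrightarrow> inorm (E d) < e"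
    by (auto simp: eventually_at)
  have "norm d * inorm (E d) \<le> e * norm d" if "norm d < r" for d
    using r [of d] that by (cases "d = 0") (auto simp: mult.commute intro: mult_left_mono)
  then show ?thesis
    using \<open>r > 0\<close> \<open>\<delta> > 0\<close> incr
    by (intro exI [of _ "min r \<delta>"]) (simp add: inorm_iscale)
qed

lemma gH_difference_quotient_tendsto:
  fixes F :: "real ^ 'n \<Rightarrow> interval"
  assumes "gH_differentiable_at F z"
  shows "((\<lambda>h. iscale (1 / h) (gHminus (F (z + h *\<^sub>R v)) (F z)))
           \<longlongrightarrow> iinner (gH_gradient F z) v) (at_right 0)"
proof (rule tendsto_of_inorm_gHminus)
  define D where "D = iinner (gH_gradient F z) v"
  define q where "q h = iscale (1 / h) (gHminus (F (z + h *\<^sub>R v)) (F z))" for h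
  have "\<forall>\<^sub>F h in at_right 0. inorm (gHminus (q h) D) < e" if "e > 0" for e
  proof -
    have nv: "norm v + 1 > 0"
      using norm_ge_zero [of v] by linarith
    define e' where "e' = e / (norm v + 1)"
    have "e' > 0"
      using \<open>e > 0\<close> nv by (simp add: e'_def)
    then obtain r where "r > 0" and r: "\<forall>d. norm d < r \<longrightarrow>
        inorm (gHminus (gHminus (F (z + d)) (F z)) (iinner (gH_gradient F z) d)) \<le> e' * norm d"
      using gH_increment_approx [OF assms] by blast
    have "inorm (gHminus (q h) D) < e" if h: "0 < h" "h < r / (norm v + 1)" for h
    proof -
      have "h * (norm v + 1) < r"
        using h(2) nv by (simp add: pos_less_divide_eq)
      then have hv: "norm (h *\<^sub>R v) < r"
        using h(1) by (simp add: algebra_simps)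
      have "inorm (gHminus (q h) D)
          = inorm (gHminus (gHminus (F (z + h *\<^sub>R v)) (F z)) (iinner (gH_gradient F z) (h *\<^sub>R v))) / h"
        using h(1) by (simp add: q_def D_def inorm_gHminus_iscale_inverse iinner_scaleR)
      also have "\<dots> \<le> e' * norm (h *\<^sub>R v) / h"
        using r [rule_format, OF hv] h(1) by (intro divide_right_mono) simp_all
      also have "\<dots> = e * (norm v / (norm v + 1))"
        using h(1) by (simp add: e'_def)
      also have "\<dots> < e"
        using \<open>e > 0\<close> nv by (simp add: pos_divide_less_eq)
      finally show ?thesis .
    qed
    then show ?thesis
      unfolding eventually_at_right_field using \<open>r > 0\<close> nv
      by (intro exI [of _ "r / (norm v + 1)"]) auto
  qed
  then show "((\<lambda>h. inorm (gHminus (q h) D)) \<longlongrightarrow> 0) (at_right 0)"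
    by (auto simp: tendsto_iff inorm_def)
qed

section \<open>Strong convexity along a segment\<close>

lemma convex_segment_point_in:
  "convex X \<Longrightarrow> x \<in> X \<Longrightarrow> y \<in> X \<Longrightarrow> t \<in> {0..1} \<Longrightarrow> x + t *\<^sub>R (y - x) \<in> X"
  using convexD_alt [of X x y t] by (simp add: algebra_simps)

lemma convex_on_increment_mono:
  fixes f :: "real \<Rightarrow> real"
  assumes f: "convex_on I f" and I: "p \<in> I" "r + h \<in> I" and "p \<le> r" "0 < h"
  shows "f (p + h) - f p \<le> f (r + h) - f r"
proof (cases "p = r")
  case False
  then have "p < r"
    using \<open>p \<le> r\<close> by simp
  have "(f p - f (p + h)) / (p - (p + h)) \<le> (f p - f (r + h)) / (p - (r + h))"
    using convex_on_slope_le(1) [OF f I, of "p + h"] \<open>p < r\<close> \<open>0 < h\<close> by simp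
  also have "\<dots> \<le> (f r - f (r + h)) / (r - (r + h))"
    using convex_on_slope_le(2) [OF f I, of r] \<open>p < r\<close> \<open>0 < h\<close> by simp
  finally show ?thesis
    using \<open>0 < h\<close> by (simp add: divide_simps)
qed simp

lemma convex_ivf_on_segment:
  fixes G :: "real ^ 'n \<Rightarrow> interval"
  assumes "convex X" "x \<in> X" "y \<in> X" and G: "convex_ivf_on X G"
  shows "convex_on {0..1} (\<lambda>t. fst (G (x + t *\<^sub>R (y - x))))"
    and "convex_on {0..1} (\<lambda>t. snd (G (x + t *\<^sub>R (y - x))))"
proof -
  define z where "z t = x + t *\<^sub>R (y - x)" for t :: real
  have zX: "z t \<in> X" if "t \<in> {0..1}" for t
    using convex_segment_point_in [OF assms(1-3) that] by (simp add: z_def)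
  have "fst (G (z ((1 - l) *\<^sub>R s + l *\<^sub>R t))) \<le> (1 - l) * fst (G (z s)) + l * fst (G (z t)) \<and>
        snd (G (z ((1 - l) *\<^sub>R s + l *\<^sub>R t))) \<le> (1 - l) * snd (G (z s)) + l * snd (G (z t))"
    if "0 < l" "l < 1" "s \<in> {0..1}" "t \<in> {0..1}" for l s t
  proof -
    have "z ((1 - l) *\<^sub>R s + l *\<^sub>R t) = (1 - l) *\<^sub>R z s + (1 - (1 - l)) *\<^sub>R z t"
      by (simp add: z_def algebra_simps)
    moreover have "1 - l \<in> {0..1}"
      using that by simp
    then have "ile (G ((1 - l) *\<^sub>R z s + (1 - (1 - l)) *\<^sub>R z t))
        (iplus (iscale (1 - l) (G (z s))) (iscale (1 - (1 - l)) (G (z t))))"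
      using G zX [of s] zX [of t] that unfolding convex_ivf_on_def by blast
    ultimately show ?thesis
      using that by (simp add: ile_def iplus_def iscale_nonneg)
  qed
  then show "convex_on {0..1} (\<lambda>t. fst (G (x + t *\<^sub>R (y - x))))"
    and "convex_on {0..1} (\<lambda>t. snd (G (x + t *\<^sub>R (y - x))))"
    by (auto intro!: convex_onI simp: z_def)
qed

lemma convex_plus_quadratic_increment:
  fixes g q :: "real \<Rightarrow> real"
  assumes g: "convex_on {0..1} g" and "0 < h" "h \<le> 1"
    and q: "\<And>t. q t = a + b * t + c / 2 * t\<^sup>2"
  shows "(g h + q h) - (g 0 + q 0) + c * h * (1 - h) \<le> (g 1 + q 1) - (g (1 - h) + q (1 - h))"
proof -
  have "g h - g 0 \<le> g 1 - g (1 - h)"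
    using convex_on_increment_mono [OF g, of 0 "1 - h" h] assms(2,3) by simp
  then show ?thesis
    by (simp add: q power2_eq_square field_simps)
qed

lemma strongly_convex_ivf_segment_increment:
  fixes F G :: "real ^ 'n \<Rightarrow> interval"
  assumes "convex X" "x \<in> X" "y \<in> X" and G: "convex_ivf_on X G"
    and F: "\<forall>z\<in>X. F z = iplus (G z) (iscale (1/2 * (norm z)\<^sup>2) (\<sigma>, \<sigma>))"
    and h: "0 < h" "h \<le> 1"
  shows "fst (F (x + h *\<^sub>R (y - x))) - fst (F x) + \<sigma> * (norm (y - x))\<^sup>2 * h * (1 - h)
           \<le> fst (F y) - fst (F (y + h *\<^sub>R (x - y)))"
    and "snd (F (x + h *\<^sub>R (y - x))) - snd (F x) + \<sigma> * (norm (y - x))\<^sup>2 * h * (1 - h)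
           \<le> snd (F y) - snd (F (y + h *\<^sub>R (x - y)))"
proof -
  define z where "z t = x + t *\<^sub>R (y - x)" for t :: real
  define q where "q t = \<sigma> / 2 * (norm (z t))\<^sup>2" for t
  have q_poly: "q t = \<sigma> / 2 * (norm x)\<^sup>2 + \<sigma> * (x \<bullet> (y - x)) * t + \<sigma> * (norm (y - x))\<^sup>2 / 2 * t\<^sup>2" for t
    unfolding q_def z_def power2_norm_eq_inner
    by (simp add: inner_add_left inner_add_right inner_diff_left inner_diff_right inner_commute
        power2_eq_square field_simps)
  have "z t \<in> X" if "t \<in> {0..1}" for t
    using convex_segment_point_in [OF assms(1-3) that] by (simp add: z_def)
  then have Fz: "fst (F (z t)) = fst (G (z t)) + q t \<and> snd (F (z t)) = snd (G (z t)) + q t"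
    if "t \<in> {0..1}" for t
    using F that by (simp add: q_def iplus_def iscale_nonneg)
  have z: "z 0 = x" "z h = x + h *\<^sub>R (y - x)" "z 1 = y" "z (1 - h) = y + h *\<^sub>R (x - y)"
    by (simp_all add: z_def algebra_simps)
  have "fst (F (z h)) - fst (F (z 0)) + \<sigma> * (norm (y - x))\<^sup>2 * h * (1 - h)
      \<le> fst (F (z 1)) - fst (F (z (1 - h)))"
    using convex_plus_quadratic_increment [OF convex_ivf_on_segment(1) [OF assms(1-4)] h q_poly]
      Fz [of 0] Fz [of h] Fz [of 1] Fz [of "1 - h"] h by (simp add: z_def)
  moreover have "snd (F (z h)) - snd (F (z 0)) + \<sigma> * (norm (y - x))\<^sup>2 * h * (1 - h)
      \<le> snd (F (z 1)) - snd (F (z (1 - h)))"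
    using convex_plus_quadratic_increment [OF convex_ivf_on_segment(2) [OF assms(1-4)] h q_poly]
      Fz [of 0] Fz [of h] Fz [of 1] Fz [of "1 - h"] h by (simp add: z_def)
  ultimately show "fst (F (x + h *\<^sub>R (y - x))) - fst (F x) + \<sigma> * (norm (y - x))\<^sup>2 * h * (1 - h)
           \<le> fst (F y) - fst (F (y + h *\<^sub>R (x - y)))"
    and "snd (F (x + h *\<^sub>R (y - x))) - snd (F x) + \<sigma> * (norm (y - x))\<^sup>2 * h * (1 - h)
           \<le> snd (F y) - snd (F (y + h *\<^sub>R (x - y)))"
    by (simp_all only: z)
qed

(* Divide the increment inequality by h and let h -> 0+: the forward gH quotient at x and the backward
   one at y converge to the directional derivatives at x and y. *)
lemma gH_dir_deriv_strongly_monotone: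
  fixes F G :: "real ^ 'n \<Rightarrow> interval"
  assumes "convex X" "x \<in> X" "y \<in> X" and G: "convex_ivf_on X G"
    and F: "\<forall>z\<in>X. F z = iplus (G z) (iscale (1/2 * (norm z)\<^sup>2) (\<sigma>, \<sigma>))"
    and Fx: "gH_differentiable_at F x" and Fy: "gH_differentiable_at F y"
  shows "fst (iinner (gH_gradient F x) (y - x)) + \<sigma> * (norm (y - x))\<^sup>2
           \<le> fst (iinner (gH_gradient F y) (y - x))"
    and "snd (iinner (gH_gradient F x) (y - x)) + \<sigma> * (norm (y - x))\<^sup>2
           \<le> snd (iinner (gH_gradient F y) (y - x))"
proof -
  define c where "c = \<sigma> * (norm (y - x))\<^sup>2"
  define Dx where "Dx = iinner (gH_gradient F x) (y - x)"
  define Dy where "Dy = iinner (gH_gradient F y) (y - x)"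
  define qx where "qx h = iscale (1 / h) (gHminus (F (x + h *\<^sub>R (y - x))) (F x))" for h
  define qy where "qy h = iscale (1 / h) (gHminus (F (y + h *\<^sub>R (x - y))) (F y))" for h
  have qx: "(qx \<longlongrightarrow> Dx) (at_right 0)"
    unfolding qx_def Dx_def by (rule gH_difference_quotient_tendsto [OF Fx])
  have "(qy \<longlongrightarrow> iinner (gH_gradient F y) (- (y - x))) (at_right 0)"
    unfolding qy_def minus_diff_eq by (rule gH_difference_quotient_tendsto [OF Fy])
  then have qy: "(qy \<longlongrightarrow> (- snd Dy, - fst Dy)) (at_right 0)"
    by (simp only: iinner_uminus Dy_def)
  have "fst (qx h) + c * (1 - h) \<le> - snd (qy h) \<and> snd (qx h) + c * (1 - h) \<le> - fst (qy h)"
    if h: "0 < h" "h < 1" for h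
  proof -
    define A where "A = fst (F (x + h *\<^sub>R (y - x))) - fst (F x)"
    define B where "B = snd (F (x + h *\<^sub>R (y - x))) - snd (F x)"
    define A' where "A' = fst (F (y + h *\<^sub>R (x - y))) - fst (F y)"
    define B' where "B' = snd (F (y + h *\<^sub>R (x - y))) - snd (F y)"
    have "A + c * (1 - h) * h \<le> - A'" "B + c * (1 - h) * h \<le> - B'"
      using strongly_convex_ivf_segment_increment [OF assms(1-5), of h] h
      by (simp_all add: A_def B_def A'_def B'_def c_def algebra_simps)
    then have "min A B + c * (1 - h) * h \<le> - max A' B'" "max A B + c * (1 - h) * h \<le> - min A' B'"
      by (simp_all add: min_def max_def)
    moreover have "qx h = (min A B / h, max A B / h)" "qy h = (min A' B' / h, max A' B' / h)"
      using h by (simp_all add: qx_def qy_def iscale_nonneg gHminus_def A_def B_def A'_def B'_def)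
    moreover have "a / h + c * (1 - h) \<le> - (b / h)" if "a + c * (1 - h) * h \<le> - b" for a b
    proof -
      have "a / h + c * (1 - h) = (a + c * (1 - h) * h) / h"
        using h by (simp add: field_simps)
      also have "\<dots> \<le> - b / h"
        using that h by (intro divide_right_mono) auto
      finally show ?thesis
        by simp
    qed
    ultimately show ?thesis
      by simp
  qed
  then have ev: "\<forall>\<^sub>F h in at_right 0.
      fst (qx h) + c * (1 - h) \<le> - snd (qy h) \<and> snd (qx h) + c * (1 - h) \<le> - fst (qy h)"
    unfolding eventually_at_right_field by (intro exI [of _ 1]) auto
  have "((\<lambda>h. fst (qx h) + c * (1 - h)) \<longlongrightarrow> fst Dx + c) (at_right 0)"
    "((\<lambda>h. snd (qx h) + c * (1 - h)) \<longlongrightarrow> snd Dx + c) (at_right 0)"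
    "((\<lambda>h. - snd (qy h)) \<longlongrightarrow> fst Dy) (at_right 0)"
    "((\<lambda>h. - fst (qy h)) \<longlongrightarrow> snd Dy) (at_right 0)"
    using qx qy by (auto intro!: tendsto_eq_intros)
  then show "fst Dx + \<sigma> * (norm (y - x))\<^sup>2 \<le> fst Dy" "snd Dx + \<sigma> * (norm (y - x))\<^sup>2 \<le> snd Dy"
    unfolding c_def [symmetric]
    using ev by (auto intro: tendsto_le [OF trivial_limit_at_right_real] elim: eventually_mono)
qed

section \<open>Absolute increments modelled on weighted l1 norms\<close>

lemma weighted_l1_scaleR: "weighted_l1 \<rho> (h *\<^sub>R d) = \<bar>h\<bar> * weighted_l1 \<rho> d"
  by (simp add: weighted_l1_def abs_mult sum_distrib_left mult.left_commute)

lemma abs_weighted_l1_diff_le: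
  assumes "\<And>m. \<bar>\<rho>' m - \<rho> m\<bar> \<le> \<kappa>"
  shows "\<bar>weighted_l1 \<rho>' d - weighted_l1 \<rho> d\<bar> \<le> \<kappa> * (\<Sum>m\<in>UNIV. \<bar>d $ m\<bar>)"
proof -
  have "\<bar>weighted_l1 \<rho>' d - weighted_l1 \<rho> d\<bar> \<le> (\<Sum>m\<in>UNIV. \<bar>\<rho>' m - \<rho> m\<bar> * \<bar>d $ m\<bar>)"
    unfolding weighted_l1_def sum_subtractf [symmetric]
    by (rule order_trans [OF sum_abs]) (simp add: abs_mult flip: left_diff_distrib)
  also have "\<dots> \<le> \<kappa> * (\<Sum>m\<in>UNIV. \<bar>d $ m\<bar>)"
    unfolding sum_distrib_left by (intro sum_mono mult_right_mono assms) simp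
  finally show ?thesis .
qed

(* p = q + u; coordinate i makes two of the three triangle inequalities between the weighted norms
   of p, q, u strict, and coordinate j the remaining one. *)
lemma weighted_l1_strict_triangle:
  fixes \<rho> :: "'n::finite \<Rightarrow> real" and u :: "real ^ 'n"
  assumes \<rho>: "\<And>m. 0 \<le> \<rho> m" and "i \<noteq> j"
    and \<gamma>: "\<gamma> \<le> 2 * \<rho> i * \<bar>u $ i\<bar>" "\<gamma> \<le> 2 * \<rho> j * \<bar>u $ j\<bar>"
  defines "v \<equiv> \<chi> m. if m = i then u $ i else if m = j then - u $ j else 0"
  defines "p \<equiv> (1/2) *\<^sub>R u + v" and "q \<equiv> v - (1/2) *\<^sub>R u"
  shows "\<gamma> \<le> weighted_l1 \<rho> p + weighted_l1 \<rho> q - weighted_l1 \<rho> u"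
    and "\<gamma> \<le> weighted_l1 \<rho> q + weighted_l1 \<rho> u - weighted_l1 \<rho> p"
    and "\<gamma> \<le> weighted_l1 \<rho> u + weighted_l1 \<rho> p - weighted_l1 \<rho> q"
proof -
  have sum_ge: "(\<Sum>m\<in>K. \<rho> m * f m) \<le> (\<Sum>m\<in>UNIV. \<rho> m * f m)" if "\<And>m. 0 \<le> f m" for K f
    using \<rho> that by (intro sum_mono2) (auto intro: mult_nonneg_nonneg)
  have pq: "p $ m = q $ m + u $ m" for m
    by (simp add: p_def q_def)
  have at_i: "p $ i = 3/2 * u $ i" "q $ i = 1/2 * u $ i"
    and at_j: "p $ j = - 1/2 * u $ j" "q $ j = - 3/2 * u $ j"
    using \<open>i \<noteq> j\<close> by (simp_all add: p_def q_def v_def)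
  have "weighted_l1 \<rho> p + weighted_l1 \<rho> q - weighted_l1 \<rho> u
      = (\<Sum>m\<in>UNIV. \<rho> m * (\<bar>p $ m\<bar> + \<bar>q $ m\<bar> - \<bar>u $ m\<bar>))"
    by (simp add: weighted_l1_def sum_subtractf [symmetric] sum.distrib [symmetric] algebra_simps)
  also have "\<dots> \<ge> (\<Sum>m\<in>{i, j}. \<rho> m * (\<bar>p $ m\<bar> + \<bar>q $ m\<bar> - \<bar>u $ m\<bar>))"
    using pq by (intro sum_ge) (smt (verit) abs_triangle_ineq4)
  finally show "\<gamma> \<le> weighted_l1 \<rho> p + weighted_l1 \<rho> q - weighted_l1 \<rho> u"
    using \<open>i \<noteq> j\<close> \<gamma> at_i at_j by (simp add: abs_mult algebra_simps)
  have "weighted_l1 \<rho> q + weighted_l1 \<rho> u - weighted_l1 \<rho> p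
      = (\<Sum>m\<in>UNIV. \<rho> m * (\<bar>q $ m\<bar> + \<bar>u $ m\<bar> - \<bar>p $ m\<bar>))"
    by (simp add: weighted_l1_def sum_subtractf [symmetric] sum.distrib [symmetric] algebra_simps)
  also have "\<dots> \<ge> (\<Sum>m\<in>{j}. \<rho> m * (\<bar>q $ m\<bar> + \<bar>u $ m\<bar> - \<bar>p $ m\<bar>))"
    using pq by (intro sum_ge) (smt (verit) abs_triangle_ineq)
  finally show "\<gamma> \<le> weighted_l1 \<rho> q + weighted_l1 \<rho> u - weighted_l1 \<rho> p"
    using \<gamma> at_j by (simp add: abs_mult algebra_simps)
  have "weighted_l1 \<rho> u + weighted_l1 \<rho> p - weighted_l1 \<rho> q
      = (\<Sum>m\<in>UNIV. \<rho> m * (\<bar>u $ m\<bar> + \<bar>p $ m\<bar> - \<bar>q $ m\<bar>))"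
    by (simp add: weighted_l1_def sum_subtractf [symmetric] sum.distrib [symmetric] algebra_simps)
  also have "\<dots> \<ge> (\<Sum>m\<in>{i}. \<rho> m * (\<bar>u $ m\<bar> + \<bar>p $ m\<bar> - \<bar>q $ m\<bar>))"
    using pq by (intro sum_ge) (smt (verit) abs_triangle_ineq)
  finally show "\<gamma> \<le> weighted_l1 \<rho> u + weighted_l1 \<rho> p - weighted_l1 \<rho> q"
    using \<gamma> at_i by (simp add: abs_mult algebra_simps)
qed

lemma abs_add_strict_triangle_contra:
  fixes P Q a b c e :: real
  assumes "\<bar>\<bar>P + Q\<bar> - a\<bar> \<le> e" "\<bar>\<bar>P\<bar> - b\<bar> \<le> e" "\<bar>\<bar>Q\<bar> - c\<bar> \<le> e"
    and "3 * e < a + b - c" "3 * e < b + c - a" "3 * e < c + a - b"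
  shows False
  using assms by (auto simp: abs_if split: if_splits)

lemma infinite_real_set_close_pair:
  fixes S :: "real set"
  assumes "infinite S" "bounded S" "0 < \<eta>"
  obtains s t where "s \<in> S" "t \<in> S" "s < t" "t - s < \<eta>"
proof -
  obtain l where "l islimpt S"
    using bounded_infinite_imp_islimpt [OF order_refl assms(2,1)] by blast
  then have T: "infinite (S \<inter> ball l (\<eta> / 2))"
    using assms(3) by (simp add: islimpt_eq_infinite_ball)
  then obtain a where a: "a \<in> S \<inter> ball l (\<eta> / 2)"
    using infinite_imp_nonempty by blast
  obtain b where "b \<in> S \<inter> ball l (\<eta> / 2) - {a}"
    using infinite_imp_nonempty [OF infinite_remove [OF T, of a]] by blast
  with a have ab: "a \<in> S \<inter> ball l (\<eta> / 2)" "b \<in> S \<inter> ball l (\<eta> / 2)" "a \<noteq> b"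
    by auto
  then have "\<bar>a - b\<bar> < \<eta>"
    using abs_triangle_ineq4 [of "l - b" "l - a"] by (auto simp: dist_real_def)
  then show ?thesis
    using that ab by (cases "a < b") (auto simp: abs_if)
qed

lemma uncountable_cover_close_pair:
  fixes J :: "real set" and E :: "nat \<Rightarrow> real set"
  assumes "uncountable J" "bounded J" "J \<subseteq> (\<Union>n. E n)" "\<And>n. 0 < \<eta> n"
  obtains n s t where "s \<in> E n \<inter> J" "t \<in> E n \<inter> J" "s < t" "t - s < \<eta> n"
proof -
  have "J = (\<Union>n. E n \<inter> J)"
    using assms(3) by blast
  then obtain n where "uncountable (E n \<inter> J)"
    using assms(1) by (metis countable_UN countableI_type)
  moreover have "bounded (E n \<inter> J)"
    using assms(2) by (rule bounded_subset) blast
  ultimately show ?thesis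
    using infinite_real_set_close_pair [OF uncountable_infinite _ assms(4)] that by metis
qed

lemma lipschitz_ge_near:
  fixes f :: "real \<Rightarrow> real"
  assumes "\<And>s t. s \<in> {0..1} \<Longrightarrow> t \<in> {0..1} \<Longrightarrow> \<bar>f s - f t\<bar> \<le> K * \<bar>s - t\<bar>"
    and "t0 \<in> {0..1}" "t \<in> {0..1}" "\<bar>t - t0\<bar> \<le> r / (\<bar>K\<bar> + 1)" "0 \<le> r"
  shows "f t0 - r \<le> f t"
proof -
  have "\<bar>f t - f t0\<bar> \<le> K * \<bar>t - t0\<bar>"
    using assms(1-3) by blast
  also have "\<dots> \<le> (\<bar>K\<bar> + 1) * \<bar>t - t0\<bar>"
    by (rule mult_right_mono) auto
  also have "\<dots> \<le> (\<bar>K\<bar> + 1) * (r / (\<bar>K\<bar> + 1))"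
    using assms(4) by (intro mult_left_mono) auto
  finally show ?thesis
    by (simp add: abs_le_iff)
qed

(* Of the increments of phi from z to z + h p, from z + h u to the same point, and from z to z + h u,
   one in absolute value is the sum of the other two; their first-order approximations
   h * weighted_l1 rho p, h * weighted_l1 rho q, h * weighted_l1 rho u miss each such relation by at
   least h * gamma. *)
lemma weighted_l1_abs_increments_contra:
  fixes \<phi> :: "real ^ 'n \<Rightarrow> real" and \<rho> \<rho>' :: "'n \<Rightarrow> real" and z u :: "real ^ 'n"
  assumes \<rho>: "\<And>m. 0 \<le> \<rho> m" and "i \<noteq> j" and "0 < \<gamma>"
    and \<gamma>: "\<gamma> \<le> 2 * \<rho> i * \<bar>u $ i\<bar>" "\<gamma> \<le> 2 * \<rho> j * \<bar>u $ j\<bar>"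
    and U: "U = (\<Sum>m\<in>UNIV. \<bar>u $ m\<bar>)" and h: "0 < h" "2 * h * U < R"
    and \<rho>': "\<And>m. \<bar>\<rho>' m - \<rho> m\<bar> \<le> \<gamma> / (16 * U)"
    and at_z: "\<And>d. norm d < R \<Longrightarrow>
      \<bar>\<bar>\<phi> (z + d) - \<phi> z\<bar> - weighted_l1 \<rho> d\<bar> \<le> \<gamma> / (16 * U) * norm d"
    and at_z': "\<And>d. norm d < R \<Longrightarrow>
      \<bar>\<bar>\<phi> (z + h *\<^sub>R u + d) - \<phi> (z + h *\<^sub>R u)\<bar> - weighted_l1 \<rho>' d\<bar> \<le> \<gamma> / (16 * U) * norm d"
  shows False
proof -
  define e where "e = \<gamma> / (16 * U)"
  define v :: "real ^ 'n" where "v = (\<chi> m. if m = i then u $ i else if m = j then - u $ j else 0)"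
  define p where "p = (1/2) *\<^sub>R u + v"
  define q where "q = v - (1/2) *\<^sub>R u"
  have "0 < \<bar>u $ i\<bar>"
    using \<gamma>(1) \<open>0 < \<gamma>\<close> by (cases "u $ i = 0") auto
  moreover have "\<bar>u $ i\<bar> \<le> U"
    unfolding U by (rule member_le_sum) auto
  ultimately have "0 < U"
    by linarith
  have l1: "(\<Sum>m\<in>UNIV. \<bar>p $ m\<bar>) \<le> 2 * U" "(\<Sum>m\<in>UNIV. \<bar>q $ m\<bar>) \<le> 2 * U"
    unfolding U sum_distrib_left
    by (auto intro!: sum_mono simp: p_def q_def v_def abs_if)
  have small: "norm (h *\<^sub>R w) \<le> 2 * h * U" "norm (h *\<^sub>R w) < R"
    if "(\<Sum>m\<in>UNIV. \<bar>w $ m\<bar>) \<le> 2 * U" for w :: "real ^ 'n"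
  proof -
    show "norm (h *\<^sub>R w) \<le> 2 * h * U"
      using norm_le_l1_cart [of w] that h(1) mult_left_mono [OF order_trans [OF norm_le_l1_cart that], of h]
      by (simp add: algebra_simps)
    then show "norm (h *\<^sub>R w) < R"
      using h(2) by linarith
  qed
  have "(\<Sum>m\<in>UNIV. \<bar>u $ m\<bar>) \<le> 2 * U"
    using \<open>0 < U\<close> U by simp
  note small_u = small [OF this]
  define P where "P = \<phi> (z + h *\<^sub>R u + h *\<^sub>R q) - \<phi> (z + h *\<^sub>R u)"
  define Q where "Q = \<phi> (z + h *\<^sub>R u) - \<phi> z"
  have zp: "z + h *\<^sub>R u + h *\<^sub>R q = z + h *\<^sub>R p"
    by (simp add: vec_eq_iff p_def q_def algebra_simps)
  have PQ: "P + Q = \<phi> (z + h *\<^sub>R p) - \<phi> z"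
    unfolding P_def Q_def zp by simp
  have err: "e * norm (h *\<^sub>R w) \<le> h * \<gamma> / 8" if "(\<Sum>m\<in>UNIV. \<bar>w $ m\<bar>) \<le> 2 * U" for w :: "real ^ 'n"
  proof -
    have "e * norm (h *\<^sub>R w) \<le> e * (2 * h * U)"
      using small(1) [OF that] \<open>0 < \<gamma>\<close> \<open>0 < U\<close> by (intro mult_left_mono) (auto simp: e_def)
    also have "\<dots> = h * \<gamma> / 8"
      using \<open>0 < U\<close> by (simp add: e_def)
    finally show ?thesis .
  qed
  have scale: "weighted_l1 \<rho> (h *\<^sub>R w) = h * weighted_l1 \<rho> w"
    "weighted_l1 \<rho>' (h *\<^sub>R w) = h * weighted_l1 \<rho>' w" for w
    using h(1) by (simp_all add: weighted_l1_scaleR)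
  have "0 < h * \<gamma>"
    using h(1) \<open>0 < \<gamma>\<close> by simp
  have "\<bar>\<bar>P + Q\<bar> - weighted_l1 \<rho> (h *\<^sub>R p)\<bar> \<le> e * norm (h *\<^sub>R p)"
    using at_z [OF small(2) [OF l1(1)]] by (simp add: PQ e_def)
  then have E1: "\<bar>\<bar>P + Q\<bar> - h * weighted_l1 \<rho> p\<bar> \<le> h * \<gamma> / 4"
    using err [OF l1(1)] \<open>0 < h * \<gamma>\<close> unfolding scale by linarith
  have "\<bar>\<bar>P\<bar> - weighted_l1 \<rho>' (h *\<^sub>R q)\<bar> \<le> e * norm (h *\<^sub>R q)"
    using at_z' [OF small(2) [OF l1(2)]] by (simp add: P_def e_def)
  moreover have "\<bar>weighted_l1 \<rho>' q - weighted_l1 \<rho> q\<bar> \<le> e * (2 * U)"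
    using abs_weighted_l1_diff_le [of \<rho>' \<rho> e q] \<rho>' l1(2) \<open>0 < \<gamma>\<close> \<open>0 < U\<close>
    by (smt (verit, best) e_def divide_nonneg_pos mult_left_mono)
  then have "\<bar>h * weighted_l1 \<rho>' q - h * weighted_l1 \<rho> q\<bar> \<le> h * \<gamma> / 8"
    using h(1) \<open>0 < U\<close> mult_left_mono [of _ _ h]
    by (simp add: e_def abs_mult flip: right_diff_distrib)
  ultimately have E2: "\<bar>\<bar>P\<bar> - h * weighted_l1 \<rho> q\<bar> \<le> h * \<gamma> / 4"
    using err [OF l1(2)] unfolding scale by linarith
  have "\<bar>\<bar>Q\<bar> - weighted_l1 \<rho> (h *\<^sub>R u)\<bar> \<le> e * norm (h *\<^sub>R u)"
    using at_z [OF small_u(2)] by (simp add: Q_def e_def)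
  then have E3: "\<bar>\<bar>Q\<bar> - h * weighted_l1 \<rho> u\<bar> \<le> h * \<gamma> / 4"
    using err [of u] \<open>0 < U\<close> U \<open>0 < h * \<gamma>\<close> unfolding scale by linarith
  have "h * \<gamma> \<le> h * weighted_l1 \<rho> p + h * weighted_l1 \<rho> q - h * weighted_l1 \<rho> u"
    "h * \<gamma> \<le> h * weighted_l1 \<rho> q + h * weighted_l1 \<rho> u - h * weighted_l1 \<rho> p"
    "h * \<gamma> \<le> h * weighted_l1 \<rho> u + h * weighted_l1 \<rho> p - h * weighted_l1 \<rho> q"
    using weighted_l1_strict_triangle [OF \<rho> \<open>i \<noteq> j\<close> \<gamma>] h(1)
    by (simp_all add: p_def q_def v_def flip: right_diff_distrib distrib_left)
  then show False
    using \<open>0 < h * \<gamma>\<close> by (intro abs_add_strict_triangle_contra [OF E1 E2 E3]) linarith+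
qed

(* Near t0 both weights stay above r0.  Approximation radii 1 / Suc n that work uniformly on
   uncountably many parameters give two base points so close that the previous lemma applies. *)
lemma abs_increment_weighted_l1_degenerate:
  fixes \<phi> :: "real ^ 'n \<Rightarrow> real" and \<rho> :: "real \<Rightarrow> 'n \<Rightarrow> real" and x u :: "real ^ 'n"
  assumes \<rho>_nonneg: "\<And>t m. t \<in> {0..1} \<Longrightarrow> 0 \<le> \<rho> t m"
    and \<rho>_lipschitz: "\<And>s t m. s \<in> {0..1} \<Longrightarrow> t \<in> {0..1} \<Longrightarrow> \<bar>\<rho> s m - \<rho> t m\<bar> \<le> K * \<bar>s - t\<bar>"
    and approx: "\<And>t e. t \<in> {0..1} \<Longrightarrow> 0 < e \<Longrightarrow> \<exists>r>0. \<forall>d. norm d < r \<longrightarrow>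
      \<bar>\<bar>\<phi> (x + t *\<^sub>R u + d) - \<phi> (x + t *\<^sub>R u)\<bar> - weighted_l1 (\<rho> t) d\<bar> \<le> e * norm d"
    and t0: "t0 \<in> {0..1}" and "i \<noteq> j" "u $ i \<noteq> 0" "u $ j \<noteq> 0"
  shows "\<rho> t0 i = 0 \<or> \<rho> t0 j = 0"
proof (rule ccontr)
  assume "\<not> ?thesis"
  then have "0 < \<rho> t0 i" "0 < \<rho> t0 j"
    using \<rho>_nonneg [OF t0, of i] \<rho>_nonneg [OF t0, of j] by auto
  define r0 where "r0 = min (\<rho> t0 i) (\<rho> t0 j) / 2"
  define L where "L = \<bar>K\<bar> + 1"
  define J where "J = {max 0 (t0 - r0 / L) .. min 1 (t0 + r0 / L)}"
  have "0 < r0" "0 < L"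
    using \<open>0 < \<rho> t0 i\<close> \<open>0 < \<rho> t0 j\<close> by (simp_all add: r0_def L_def add_pos_nonneg)
  then have "0 < r0 / L"
    by simp
  then have J: "J \<subseteq> {0..1}" "uncountable J" "bounded J"
    using t0 by (auto simp: J_def uncountable_closed_interval)
  have \<rho>_J: "r0 \<le> \<rho> t i \<and> r0 \<le> \<rho> t j" if "t \<in> J" for t
  proof -
    have t: "t \<in> {0..1}" "\<bar>t - t0\<bar> \<le> r0 / (\<bar>K\<bar> + 1)"
      using J(1) that by (auto simp: J_def L_def abs_le_iff)
    have "\<rho> t0 i - r0 \<le> \<rho> t i" "\<rho> t0 j - r0 \<le> \<rho> t j"
      using lipschitz_ge_near [of "\<lambda>s. \<rho> s i" K t0 t r0] lipschitz_ge_near [of "\<lambda>s. \<rho> s j" K t0 t r0]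
        \<rho>_lipschitz t0 t \<open>0 < r0\<close> by auto
    then show ?thesis
      by (auto simp: r0_def min_def)
  qed
  define U where "U = (\<Sum>m\<in>UNIV. \<bar>u $ m\<bar>)"
  define \<gamma> where "\<gamma> = 2 * r0 * min \<bar>u $ i\<bar> \<bar>u $ j\<bar>"
  have "0 < \<gamma>"
    using \<open>0 < r0\<close> \<open>u $ i \<noteq> 0\<close> \<open>u $ j \<noteq> 0\<close> by (simp add: \<gamma>_def)
  have "0 < U"
    using member_le_sum [of i UNIV "\<lambda>m. \<bar>u $ m\<bar>"] \<open>u $ i \<noteq> 0\<close> by (simp add: U_def)
  define e where "e = \<gamma> / (16 * U)"
  have "0 < e"
    using \<open>0 < \<gamma>\<close> \<open>0 < U\<close> by (simp add: e_def)
  define E where "E n = {t. \<forall>d. norm d < 1 / Suc n \<longrightarrow>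
      \<bar>\<bar>\<phi> (x + t *\<^sub>R u + d) - \<phi> (x + t *\<^sub>R u)\<bar> - weighted_l1 (\<rho> t) d\<bar> \<le> e * norm d}" for n :: nat
  have cover: "J \<subseteq> (\<Union>n. E n)"
  proof
    fix t assume "t \<in> J"
    then obtain r where "0 < r" and r: "\<forall>d. norm d < r \<longrightarrow>
        \<bar>\<bar>\<phi> (x + t *\<^sub>R u + d) - \<phi> (x + t *\<^sub>R u)\<bar> - weighted_l1 (\<rho> t) d\<bar> \<le> e * norm d"
      using approx [OF subsetD [OF J(1) \<open>t \<in> J\<close>] \<open>0 < e\<close>] by blast
    obtain n where "inverse (Suc n) < r"
      using reals_Archimedean [OF \<open>0 < r\<close>] by blast
    then have "t \<in> E n"
      using r by (auto simp: E_def inverse_eq_divide)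
    then show "t \<in> (\<Union>n. E n)"
      by blast
  qed
  obtain n t t' where t: "t \<in> E n \<inter> J" "t' \<in> E n \<inter> J" "t < t'"
    and close: "t' - t < min (\<gamma> / (16 * L * U)) (1 / (2 * U * Suc n))"
    by (rule uncountable_cover_close_pair [OF J(2,3) cover, of "\<lambda>n. min (\<gamma> / (16 * L * U)) (1 / (2 * U * Suc n))"])
      (use \<open>0 < \<gamma>\<close> \<open>0 < U\<close> \<open>0 < L\<close> in auto)
  define h where "h = t' - t"
  show False
  proof (rule weighted_l1_abs_increments_contra [of "\<rho> t" i j \<gamma> u U h "1 / Suc n" "\<rho> t'" \<phi> "x + t *\<^sub>R u"])
    have "h * (2 * U * Suc n) < 1"
      using close \<open>0 < U\<close> by (simp add: h_def pos_less_divide_eq del: of_nat_Suc)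
    then show "2 * h * U < 1 / Suc n"
      by (simp add: pos_less_divide_eq algebra_simps del: of_nat_Suc)
    have "\<bar>\<rho> t' m - \<rho> t m\<bar> \<le> K * \<bar>t' - t\<bar>" for m
      using \<rho>_lipschitz J(1) t by blast
    also have "K * \<bar>t' - t\<bar> \<le> L * h"
      using \<open>t < t'\<close> by (simp add: h_def L_def mult_right_mono)
    also have "\<dots> \<le> L * (\<gamma> / (16 * L * U))"
      using close \<open>0 < L\<close> by (intro mult_left_mono) (simp_all add: h_def)
    also have "\<dots> = \<gamma> / (16 * U)"
      using \<open>0 < L\<close> by simp
    finally show "\<bar>\<rho> t' m - \<rho> t m\<bar> \<le> \<gamma> / (16 * U)" for m .
    have xt: "x + t *\<^sub>R u + h *\<^sub>R u = x + t' *\<^sub>R u"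
      by (simp add: h_def algebra_simps)
    show "\<bar>\<bar>\<phi> (x + t *\<^sub>R u + h *\<^sub>R u + d) - \<phi> (x + t *\<^sub>R u + h *\<^sub>R u)\<bar> - weighted_l1 (\<rho> t') d\<bar>
        \<le> \<gamma> / (16 * U) * norm d" if "norm d < 1 / Suc n" for d
      unfolding xt using t(2) that by (simp add: E_def e_def)
  qed (use \<open>i \<noteq> j\<close> \<open>0 < \<gamma>\<close> \<rho>_nonneg \<rho>_J t J(1) \<open>t < t'\<close> in
      \<open>auto simp: U_def h_def E_def e_def \<gamma>_def intro!: mult_mono\<close>)
qed

section \<open>Continuous selections of monotone functions\<close>

lemma continuous_selection_step:
  fixes g h1 h2 :: "real \<Rightarrow> real"
  assumes \<tau>: "\<tau> \<in> {a..<b}" "g \<tau> = h1 \<tau>"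
    and cont: "continuous_on {a..b} g" "continuous_on {a..b} h2"
    and mono: "mono_on {a..b} h1" "mono_on {a..b} h2"
    and sel: "\<And>t. t \<in> {a..b} \<Longrightarrow> g t = h1 t \<or> g t = h2 t"
  obtains t where "\<tau> < t" "t \<le> b" "g \<tau> \<le> g t"
proof (cases "g \<tau> \<le> h2 \<tau>")
  case True
  have "h1 \<tau> \<le> h1 b" "h2 \<tau> \<le> h2 b"
    using \<tau>(1) by (auto intro!: mono_onD [OF mono(1)] mono_onD [OF mono(2)])
  then have "g \<tau> \<le> g b"
    using sel [of b] \<tau> True by auto
  then show ?thesis
    using that \<tau>(1) by auto
next
  case False
  define A where "A = {t \<in> {a..b}. g t \<le> h2 t}"
  have "closed A"
    unfolding A_def by (rule continuous_on_closed_Collect_le [OF cont(1,2)]) simp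
  moreover have "\<tau> \<in> - A"
    using False by (simp add: A_def)
  ultimately obtain e where "0 < e" and e: "ball \<tau> e \<subseteq> - A"
    using open_contains_ball [of "- A"] by (auto simp: open_Compl)
  define t where "t = min b (\<tau> + e / 2)"
  have t: "\<tau> < t" "t \<le> b" "t \<in> {a..b}"
    using \<tau>(1) \<open>0 < e\<close> by (auto simp: t_def)
  then have "t \<in> ball \<tau> e"
    using \<open>0 < e\<close> by (auto simp: t_def dist_real_def)
  then have "g t = h1 t"
    using e sel [OF t(3)] t(3) by (force simp: A_def)
  moreover have "h1 \<tau> \<le> h1 t"
    using \<tau>(1) t by (intro mono_onD [OF mono(1)]) auto
  ultimately show ?thesis
    using that t \<tau>(2) by auto
qed

lemma continuous_selection_mono:
  fixes g h1 h2 :: "real \<Rightarrow> real"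
  assumes "a \<le> b"
    and cont: "continuous_on {a..b} g" "continuous_on {a..b} h1" "continuous_on {a..b} h2"
    and mono: "mono_on {a..b} h1" "mono_on {a..b} h2"
    and sel: "\<And>t. t \<in> {a..b} \<Longrightarrow> g t = h1 t \<or> g t = h2 t"
  shows "g a \<le> g b"
proof -
  define S where "S = {t \<in> {a..b}. g a \<le> g t}"
  have "closed S"
    unfolding S_def by (rule continuous_on_closed_Collect_le [OF continuous_on_const cont(1)]) simp
  moreover have "a \<in> S" "bdd_above S"
    using \<open>a \<le> b\<close> by (auto simp: S_def bdd_above_def)
  ultimately have "Sup S \<in> S"
    by (intro closed_contains_Sup) auto
  show ?thesis
  proof (cases "Sup S = b")
    case False
    then have "Sup S \<in> {a..<b}"
      using \<open>Sup S \<in> S\<close> by (auto simp: S_def)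
    moreover have "g (Sup S) = h1 (Sup S) \<or> g (Sup S) = h2 (Sup S)"
      using sel \<open>Sup S \<in> S\<close> by (auto simp: S_def)
    ultimately obtain t where t: "Sup S < t" "t \<le> b" "g (Sup S) \<le> g t"
      using continuous_selection_step [of "Sup S" a b g h1 h2] continuous_selection_step [of "Sup S" a b g h2 h1]
        cont mono sel by blast
    then have "t \<in> S"
      using \<open>Sup S \<in> S\<close> by (auto simp: S_def)
    then show ?thesis
      using cSup_upper [OF _ \<open>bdd_above S\<close>] t(1) by fastforce
  qed (use \<open>Sup S \<in> S\<close> in \<open>auto simp: S_def\<close>)
qed

lemma mono_on_combination_minus_rate:
  fixes P Q :: "real \<Rightarrow> real"
  assumes w: "0 \<le> w" "0 \<le> w'" "w + w' = 1"
    and rate: "\<And>s t. s \<in> S \<Longrightarrow> t \<in> S \<Longrightarrow> s < t \<Longrightarrow> P s + c * (t - s) \<le> P t \<and> Q s + c * (t - s) \<le> Q t"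
  shows "mono_on S (\<lambda>t. w * P t + w' * Q t - c * t)"
proof (rule mono_onI)
  fix s t assume st: "s \<in> S" "t \<in> S" "s \<le> t"
  show "w * P s + w' * Q s - c * s \<le> w * P t + w' * Q t - c * t"
  proof (cases "s = t")
    case False
    define k where "k = c * (t - s)"
    have "w * k \<le> w * P t - w * P s" "w' * k \<le> w' * Q t - w' * Q s"
      using rate [of s t] st w False unfolding k_def
      by (auto simp flip: right_diff_distrib intro!: mult_left_mono)
    moreover have "w * k + w' * k = k"
      using w(3) by (simp flip: distrib_right)
    moreover have "c * t = c * s + k"
      by (simp add: k_def algebra_simps)
    ultimately show ?thesis
      by linarith
  qed simp
qed

section \<open>The W-combination of the gH-gradient\<close>

lemma Wmap_inner_select:
  fixes V :: "interval ^ 'n" and u :: "real ^ 'n"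
  assumes degenerate: "\<And>i j. i \<noteq> j \<Longrightarrow> u $ i \<noteq> 0 \<Longrightarrow> u $ j \<noteq> 0 \<Longrightarrow> iwidth (V $ i) = 0 \<or> iwidth (V $ j) = 0"
  shows "Wmap w w' V \<bullet> u = w * fst (iinner V u) + w' * snd (iinner V u) \<or>
         Wmap w w' V \<bullet> u = w * snd (iinner V u) + w' * fst (iinner V u)"
proof -
  have W: "Wmap w w' V \<bullet> u = w * (\<Sum>k\<in>UNIV. u $ k * fst (V $ k)) + w' * (\<Sum>k\<in>UNIV. u $ k * snd (V $ k))"
    by (simp add: Wmap_def inner_vec_def sum_distrib_left sum.distrib [symmetric] algebra_simps)
  have "(\<forall>k. 0 \<le> u $ k \<or> iwidth (V $ k) = 0) \<or> (\<forall>k. u $ k \<le> 0 \<or> iwidth (V $ k) = 0)"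
    using degenerate by (metis linorder_le_cases)
  then show ?thesis
  proof
    assume "\<forall>k. 0 \<le> u $ k \<or> iwidth (V $ k) = 0"
    then have "iscale (u $ k) (V $ k) = (u $ k * fst (V $ k), u $ k * snd (V $ k))" for k
      by (metis iscale_nonneg iscale_degenerate iwidth_def eq_iff_diff_eq_0)
    then have "iinner V u = (\<Sum>k\<in>UNIV. u $ k * fst (V $ k), \<Sum>k\<in>UNIV. u $ k * snd (V $ k))"
      by (simp add: iinner_def prod_eq_iff fst_sum snd_sum)
    then show ?thesis
      using W by simp
  next
    assume "\<forall>k. u $ k \<le> 0 \<or> iwidth (V $ k) = 0"
    then have "iscale (u $ k) (V $ k) = (u $ k * snd (V $ k), u $ k * fst (V $ k))" for k
      by (metis iscale_nonpos iscale_degenerate iwidth_def eq_iff_diff_eq_0)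
    then have "iinner V u = (\<Sum>k\<in>UNIV. u $ k * snd (V $ k), \<Sum>k\<in>UNIV. u $ k * fst (V $ k))"
      by (simp add: iinner_def prod_eq_iff fst_sum snd_sum)
    then show ?thesis
      using W by simp
  qed
qed

lemma inorm_le_inorm_vec: "inorm (V $ i) \<le> inorm_vec V"
  unfolding inorm_vec_def by (rule member_le_sum) (auto simp: inorm_def)

lemma norm_Wmap_diff_le:
  assumes w: "0 \<le> w" "0 \<le> w'" "w + w' = 1"
  shows "norm (Wmap w w' U - Wmap w w' V) \<le> inorm_vec (gHminus_vec U V)"
proof -
  have "\<bar>(Wmap w w' U - Wmap w w' V) $ i\<bar> \<le> inorm (gHminus_vec U V $ i)" for i
  proof -
    define a where "a = fst (U $ i) - fst (V $ i)"
    define b where "b = snd (U $ i) - snd (V $ i)"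
    have "\<bar>(Wmap w w' U - Wmap w w' V) $ i\<bar> = \<bar>w * a + w' * b\<bar>"
      by (simp add: Wmap_def a_def b_def algebra_simps)
    also have "\<dots> \<le> w * \<bar>a\<bar> + w' * \<bar>b\<bar>"
      using w by (metis abs_mult abs_of_nonneg abs_triangle_ineq)
    also have "\<dots> \<le> w * max (\<bar>a\<bar>) (\<bar>b\<bar>) + w' * max (\<bar>a\<bar>) (\<bar>b\<bar>)"
      using w by (intro add_mono mult_left_mono) auto
    also have "\<dots> = inorm (gHminus_vec U V $ i)"
      using w(3) by (simp add: gHminus_vec_def inorm_gHminus a_def b_def flip: distrib_right)
    finally show ?thesis .
  qed
  then have "norm (Wmap w w' U - Wmap w w' V) \<le> (\<Sum>i\<in>UNIV. inorm (gHminus_vec U V $ i))"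
    by (intro order_trans [OF norm_le_l1_cart sum_mono])
  then show ?thesis
    by (simp add: inorm_vec_def)
qed

locale gH_segment =
  fixes F :: "real ^ 'n \<Rightarrow> interval" and X :: "(real ^ 'n) set" and x y :: "real ^ 'n" and M :: real
  assumes convex: "convex X" and x: "x \<in> X" and y: "y \<in> X"
    and differentiable: "\<forall>z\<in>X. gH_differentiable_at F z"
    and lipschitz: "\<forall>p\<in>X. \<forall>q\<in>X.
      inorm_vec (gHminus_vec (gH_gradient F p) (gH_gradient F q)) \<le> M * norm (p - q)"
begin

definition u where "u = y - x"

definition z where "z t = x + t *\<^sub>R u"

definition grad where "grad t = gH_gradient F (z t)"

lemma z_in: "t \<in> {0..1} \<Longrightarrow> z t \<in> X"
  using convex_segment_point_in [OF convex x y] by (simp add: z_def u_def)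

lemma grad_valid: "t \<in> {0..1} \<Longrightarrow> fst (grad t $ k) \<le> snd (grad t $ k)"
  unfolding grad_def by (rule gH_gradient_valid) (use differentiable z_in in blast)

lemma grad_lipschitz:
  assumes "s \<in> {0..1}" "t \<in> {0..1}"
  shows "\<bar>fst (grad s $ k) - fst (grad t $ k)\<bar> \<le> M * norm u * \<bar>s - t\<bar>"
    and "\<bar>snd (grad s $ k) - snd (grad t $ k)\<bar> \<le> M * norm u * \<bar>s - t\<bar>"
proof -
  have "inorm (gHminus (grad s $ k) (grad t $ k)) \<le> inorm_vec (gHminus_vec (grad s) (grad t))"
    using inorm_le_inorm_vec [of "gHminus_vec (grad s) (grad t)" k] by (simp add: gHminus_vec_def)
  also have "\<dots> \<le> M * norm (z s - z t)"
    using lipschitz z_in assms by (simp add: grad_def)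
  also have "z s - z t = (s - t) *\<^sub>R u"
    by (simp add: z_def algebra_simps)
  finally show "\<bar>fst (grad s $ k) - fst (grad t $ k)\<bar> \<le> M * norm u * \<bar>s - t\<bar>"
    and "\<bar>snd (grad s $ k) - snd (grad t $ k)\<bar> \<le> M * norm u * \<bar>s - t\<bar>"
    by (simp_all add: inorm_gHminus mult_ac)
qed

lemma continuous_on_grad:
  shows "continuous_on {0..1} (\<lambda>t. fst (grad t $ k))"
    and "continuous_on {0..1} (\<lambda>t. snd (grad t $ k))"
proof -
  have "M * norm u * \<bar>s - t\<bar> \<le> \<bar>M\<bar> * norm u * dist s t" for s t
    by (simp add: dist_real_def mult_right_mono)
  then have L: "dist (fst (grad s $ k)) (fst (grad t $ k)) \<le> \<bar>M\<bar> * norm u * dist s t"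
    "dist (snd (grad s $ k)) (snd (grad t $ k)) \<le> \<bar>M\<bar> * norm u * dist s t"
    if "s \<in> {0..1}" "t \<in> {0..1}" for s t
    using grad_lipschitz [OF that, of k] unfolding dist_real_def by (meson order_trans)+
  show "continuous_on {0..1} (\<lambda>t. fst (grad t $ k))"
    by (rule lipschitz_on_continuous_on [OF lipschitz_onI [of _ _ "\<bar>M\<bar> * norm u"]]) (use L in auto)
  show "continuous_on {0..1} (\<lambda>t. snd (grad t $ k))"
    by (rule lipschitz_on_continuous_on [OF lipschitz_onI [of _ _ "\<bar>M\<bar> * norm u"]]) (use L in auto)
qed

lemma continuous_on_iinner_grad:
  shows "continuous_on {0..1} (\<lambda>t. fst (iinner (grad t) u))"
    and "continuous_on {0..1} (\<lambda>t. snd (iinner (grad t) u))"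
proof -
  have "continuous_on {0..1} (\<lambda>t. fst (iscale (u $ k) (grad t $ k))) \<and>
        continuous_on {0..1} (\<lambda>t. snd (iscale (u $ k) (grad t $ k)))" for k
    using continuous_on_grad [of k]
    by (cases "0 \<le> u $ k") (auto simp: iscale_nonneg iscale_nonpos intro: continuous_on_mult_left)
  then show "continuous_on {0..1} (\<lambda>t. fst (iinner (grad t) u))"
    and "continuous_on {0..1} (\<lambda>t. snd (iinner (grad t) u))"
    by (auto simp: iinner_def fst_sum snd_sum intro!: continuous_on_sum)
qed

lemma continuous_on_Wmap_grad: "continuous_on {0..1} (\<lambda>t. Wmap w w' (grad t) \<bullet> u)"
proof -
  have "Wmap w w' (grad t) \<bullet> u = (\<Sum>k\<in>UNIV. (w * fst (grad t $ k) + w' * snd (grad t $ k)) * u $ k)" for t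
    by (simp add: Wmap_def inner_vec_def)
  then show ?thesis
    by (simp only:) (intro continuous_on_sum continuous_intros continuous_on_grad)
qed

lemma grad_width_degenerate:
  assumes "t \<in> {0..1}" "i \<noteq> j" "u $ i \<noteq> 0" "u $ j \<noteq> 0"
  shows "iwidth (grad t $ i) = 0 \<or> iwidth (grad t $ j) = 0"
proof (rule abs_increment_weighted_l1_degenerate
    [where \<phi> = "\<lambda>p. iwidth (F p)" and \<rho> = "\<lambda>t m. iwidth (grad t $ m)" and K = "2 * M * norm u"])
  show "0 \<le> iwidth (grad s $ m)" if "s \<in> {0..1}" for s m
    using grad_valid [OF that] by (simp add: iwidth_def)
  show "\<bar>iwidth (grad s $ m) - iwidth (grad t $ m)\<bar> \<le> 2 * M * norm u * \<bar>s - t\<bar>"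
    if "s \<in> {0..1}" "t \<in> {0..1}" for s t m
    using grad_lipschitz [OF that, of m] by (simp add: iwidth_def abs_le_iff)
  show "\<exists>r>0. \<forall>d. norm d < r \<longrightarrow>
      \<bar>\<bar>iwidth (F (x + s *\<^sub>R u + d)) - iwidth (F (x + s *\<^sub>R u))\<bar> - weighted_l1 (\<lambda>m. iwidth (grad s $ m)) d\<bar>
        \<le> e * norm d" if "s \<in> {0..1}" "0 < e" for s e
  proof -
    have "gH_differentiable_at F (z s)" "0 < e / 2"
      using differentiable z_in that by auto
    then obtain r where "0 < r" and r: "\<forall>d. norm d < r \<longrightarrow>
        inorm (gHminus (gHminus (F (z s + d)) (F (z s))) (iinner (grad s) d)) \<le> e / 2 * norm d"
      unfolding grad_def by (rule gH_increment_approx [THEN exE]) blast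
    have "\<bar>\<bar>iwidth (F (z s + d)) - iwidth (F (z s))\<bar> - weighted_l1 (\<lambda>m. iwidth (grad s $ m)) d\<bar>
        \<le> e * norm d" if "norm d < r" for d
    proof -
      have "\<bar>\<bar>iwidth (F (z s + d)) - iwidth (F (z s))\<bar> - weighted_l1 (\<lambda>m. iwidth (grad s $ m)) d\<bar>
          = \<bar>iwidth (gHminus (F (z s + d)) (F (z s))) - iwidth (iinner (grad s) d)\<bar>"
        by (simp add: iwidth_gHminus iwidth_iinner [OF grad_valid [OF \<open>s \<in> {0..1}\<close>]])
      also have "\<dots> \<le> 2 * inorm (gHminus (gHminus (F (z s + d)) (F (z s))) (iinner (grad s) d))"
        by (rule abs_iwidth_diff_le)
      also have "\<dots> \<le> e * norm d"
        using r that by auto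
      finally show ?thesis .
    qed
    then show ?thesis
      using \<open>0 < r\<close> by (auto simp: z_def)
  qed
qed (use assms in auto)

lemma Wmap_grad_strongly_increasing:
  fixes G :: "real ^ 'n \<Rightarrow> interval"
  assumes w: "0 \<le> w" "0 \<le> w'" "w + w' = 1"
    and G: "convex_ivf_on X G"
    and F: "\<forall>z\<in>X. F z = iplus (G z) (iscale (1/2 * (norm z)\<^sup>2) (\<sigma>, \<sigma>))"
  shows "\<sigma> * (norm u)\<^sup>2 \<le> Wmap w w' (grad 1) \<bullet> u - Wmap w w' (grad 0) \<bullet> u"
proof -
  define c where "c = \<sigma> * (norm u)\<^sup>2"
  define P where "P t = fst (iinner (grad t) u)" for t
  define Q where "Q t = snd (iinner (grad t) u)" for t
  have PQ: "P s + c * (t - s) \<le> P t \<and> Q s + c * (t - s) \<le> Q t"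
    if st: "s \<in> {0..1}" "t \<in> {0..1}" "s < t" for s t
  proof -
    have zst: "z t - z s = (t - s) *\<^sub>R u"
      by (simp add: z_def algebra_simps)
    have diff: "gH_differentiable_at F (z s)" "gH_differentiable_at F (z t)"
      using differentiable z_in st by auto
    have proj: "fst (iinner V (z t - z s)) = (t - s) * fst (iinner V u)"
      "snd (iinner V (z t - z s)) = (t - s) * snd (iinner V u)" for V
      using st by (simp_all add: zst iinner_scaleR iscale_nonneg)
    have nz: "(norm (z t - z s))\<^sup>2 = (t - s) * ((t - s) * (norm u)\<^sup>2)"
      by (simp add: zst power_mult_distrib power2_eq_square)
    have "(t - s) * P s + (t - s) * (c * (t - s)) \<le> (t - s) * P t"
      "(t - s) * Q s + (t - s) * (c * (t - s)) \<le> (t - s) * Q t"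
      using gH_dir_deriv_strongly_monotone [OF convex z_in z_in G F diff, unfolded proj nz] st
      by (simp_all add: P_def Q_def c_def grad_def mult_ac)
    then show ?thesis
      using st by (simp add: mult_le_cancel_left_pos flip: distrib_left)
  qed
  define h1 where "h1 t = w * P t + w' * Q t - c * t" for t
  define h2 where "h2 t = w * Q t + w' * P t - c * t" for t
  have mono: "mono_on {0..1} h1" "mono_on {0..1} h2"
    using mono_on_combination_minus_rate [OF w, of "{0..1}" P c Q]
      mono_on_combination_minus_rate [OF w, of "{0..1}" Q c P] PQ
    by (simp_all add: h1_def [abs_def] h2_def [abs_def])
  have "(Wmap w w' (grad 0) \<bullet> u - c * 0) \<le> (Wmap w w' (grad 1) \<bullet> u - c * 1)"
  proof (rule continuous_selection_mono [of 0 1 "\<lambda>t. Wmap w w' (grad t) \<bullet> u - c * t" h1 h2])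
    show "continuous_on {0..1} (\<lambda>t. Wmap w w' (grad t) \<bullet> u - c * t)"
      by (intro continuous_intros continuous_on_Wmap_grad)
    show "continuous_on {0..1} h1" "continuous_on {0..1} h2"
      unfolding h1_def h2_def P_def Q_def
      by (intro continuous_intros continuous_on_iinner_grad)+
    show "Wmap w w' (grad t) \<bullet> u - c * t = h1 t \<or> Wmap w w' (grad t) \<bullet> u - c * t = h2 t"
      if "t \<in> {0..1}" for t
      using Wmap_inner_select [of u "grad t" w w'] grad_width_degenerate [OF that]
      by (auto simp: h1_def h2_def P_def Q_def)
  qed (use mono in auto)
  then show ?thesis
    by (simp add: c_def)
qed

end

lemma Wmap_gH_gradient_strongly_monotone:
  fixes F G :: "real ^ 'n \<Rightarrow> interval"
  assumes w: "0 \<le> w" "0 \<le> w'" "w + w' = 1"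
    and "convex X" "x \<in> X" "y \<in> X"
    and G: "convex_ivf_on X G"
    and F: "\<forall>z\<in>X. F z = iplus (G z) (iscale (1/2 * (norm z)\<^sup>2) (\<sigma>, \<sigma>))"
    and "\<forall>z\<in>X. gH_differentiable_at F z"
    and "\<forall>p\<in>X. \<forall>q\<in>X. inorm_vec (gHminus_vec (gH_gradient F p) (gH_gradient F q)) \<le> M * norm (p - q)"
  shows "\<sigma> * (norm (x - y))\<^sup>2 \<le> (Wmap w w' (gH_gradient F x) - Wmap w w' (gH_gradient F y)) \<bullet> (x - y)"
proof -
  interpret gH_segment F X x y M
    using assms by unfold_locales auto
  have "z 0 = x" "z 1 = y"
    by (simp_all add: z_def u_def)
  then show ?thesis
    using Wmap_grad_strongly_increasing [OF w G F]
    by (simp add: grad_def u_def norm_minus_commute algebra_simps)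
qed

lemma Wmap_gH_gradient_cocoercive:
  fixes F G :: "real ^ 'n \<Rightarrow> interval"
  assumes w: "0 \<le> w" "0 \<le> w'" "w + w' = 1"
    and "convex X" "x \<in> X" "y \<in> X"
    and G: "convex_ivf_on X G" and "0 \<le> \<sigma>"
    and F: "\<forall>z\<in>X. F z = iplus (G z) (iscale (1/2 * (norm z)\<^sup>2) (\<sigma>, \<sigma>))"
    and diff: "\<forall>z\<in>X. gH_differentiable_at F z"
    and "0 < M"
    and lip: "\<forall>p\<in>X. \<forall>q\<in>X. inorm_vec (gHminus_vec (gH_gradient F p) (gH_gradient F q)) \<le> M * norm (p - q)"
  shows "\<sigma> / M\<^sup>2 * (norm (Wmap w w' (gH_gradient F x) - Wmap w w' (gH_gradient F y)))\<^sup>2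
           \<le> (Wmap w w' (gH_gradient F x) - Wmap w w' (gH_gradient F y)) \<bullet> (x - y)"
proof -
  have "norm (Wmap w w' (gH_gradient F x) - Wmap w w' (gH_gradient F y)) \<le> M * norm (x - y)"
    using norm_Wmap_diff_le [OF w] lip assms(5,6) order_trans by blast
  then have "\<sigma> / M\<^sup>2 * (norm (Wmap w w' (gH_gradient F x) - Wmap w w' (gH_gradient F y)))\<^sup>2
      \<le> \<sigma> / M\<^sup>2 * (M * norm (x - y))\<^sup>2"
    using \<open>0 \<le> \<sigma>\<close> by (intro mult_left_mono power_mono) auto
  also have "\<dots> = \<sigma> * (norm (x - y))\<^sup>2"
    using \<open>0 < M\<close> by (simp add: power_mult_distrib)
  also have "\<dots> \<le> (Wmap w w' (gH_gradient F x) - Wmap w w' (gH_gradient F y)) \<bullet> (x - y)"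
    by (rule Wmap_gH_gradient_strongly_monotone [OF w assms(4-6) G F diff lip])
  finally show ?thesis .
qed

theorem lemma5p6:
  fixes F :: "real ^ 'n \<Rightarrow> interval" and X :: "(real ^ 'n) set" and w w' :: real
  assumes "w \<in> {0..1}" and "w' \<in> {0..1}" and "w + w' = 1"
    and "X \<noteq> {}" and "convex X"
    and "is_ivf F"
    and "strongly_convex_ivf_on X F"
    and "\<forall>x\<in>X. gH_differentiable_at F x"
    and "gH_lipschitz_gradient_on X F"
  shows "\<exists>\<sigma> > 0. \<exists>L > 0. \<forall>x\<in>X. \<forall>y\<in>X.
     (Wmap w w' (gH_gradient F x) - Wmap w w' (gH_gradient F y)) \<bullet> (x - y)
       \<ge> \<sigma> / L\<^sup>2 * (norm (Wmap w w' (gH_gradient F x) - Wmap w w' (gH_gradient F y)))\<^sup>2"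
proof -
  obtain G \<sigma> where G: "convex_ivf_on X G" and "\<sigma> > 0"
    and F: "\<forall>z\<in>X. F z = iplus (G z) (iscale (1/2 * (norm z)\<^sup>2) (\<sigma>, \<sigma>))"
    using assms(7) unfolding strongly_convex_ivf_on_def by blast
  obtain M where "M > 0" and lip: "\<forall>p\<in>X. \<forall>q\<in>X.
      inorm_vec (gHminus_vec (gH_gradient F p) (gH_gradient F q)) \<le> M * norm (p - q)"
    using assms(9) unfolding gH_lipschitz_gradient_on_def by blast
  have w: "0 \<le> w" "0 \<le> w'" "w + w' = 1"
    using assms(1-3) by auto
  have "\<sigma> / M\<^sup>2 * (norm (Wmap w w' (gH_gradient F x) - Wmap w w' (gH_gradient F y)))\<^sup>2
      \<le> (Wmap w w' (gH_gradient F x) - Wmap w w' (gH_gradient F y)) \<bullet> (x - y)"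
    if "x \<in> X" "y \<in> X" for x y
    using Wmap_gH_gradient_cocoercive [OF w assms(5) that G _ F assms(8) \<open>M > 0\<close> lip] \<open>\<sigma> > 0\<close>
    by simp
  then show ?thesis
    using \<open>\<sigma> > 0\<close> \<open>M > 0\<close> by blast
qed

end
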